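(* Let $(E,\tau)$ be a uniquely generated violator space. Then the partition $\mathcal{P}$ of $2^E$ into the equivalence classes of the relation $X\sim Y\iff\tau(X)=\tau(Y)$ is a hypercube partition of $2^E$, i.e., every equivalence class is an interval $[A,B]=\{C\subseteq E: A\subseteq C\subseteq B\}$ for some $A\subseteq B\subseteq E$.
   Context: $E$ is a finite set and $\tau:2^E\to 2^E$. $(E,\tau)$ is a violator space if (C1) $Y\subseteq\tau(Y)$ for all $Y\subseteq E$, and (C22) for all $F,G\subseteq E$, $F\subseteq G\subseteq\tau(F)$ implies $\tau(G)=\tau(F)$. For $X\subseteq E$, a generator of $X$ is any $B\subseteq E$ with $\tau(B)=\tau(X)$; a basis of $X$ is an inclusion-minimal generator of $X$. The space is uniquely generated if every $X\subseteq E$ has exactly one basis. A hypercube partition of $2^E$ is a partition of $2^E$ into disjoint intervals $[A,B]$. *)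

theory Defs
  imports Main
begin

text \<open>A violator space (E, tau): E finite, tau maps subsets of E to subsets of E,
  satisfying (C1) and (C22). Only the values of tau on subsets of E matter.\<close>
definition violator_space :: "'a set \<Rightarrow> ('a set \<Rightarrow> 'a set) \<Rightarrow> bool" where
  "violator_space E tau \<longleftrightarrow> finite E
     \<and> (\<forall>Y. Y \<subseteq> E \<longrightarrow> tau Y \<subseteq> E)
     \<and> (\<forall>Y. Y \<subseteq> E \<longrightarrow> Y \<subseteq> tau Y)
     \<and> (\<forall>F G. F \<subseteq> E \<longrightarrow> G \<subseteq> E \<longrightarrow> F \<subseteq> G \<longrightarrow> G \<subseteq> tau F \<longrightarrow> tau G = tau F)"

definition is_generator :: "'a set \<Rightarrow> ('a set \<Rightarrow> 'a set) \<Rightarrow> 'a set \<Rightarrow> 'a set \<Rightarrow> bool" where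
  "is_generator E tau X B \<longleftrightarrow> B \<subseteq> E \<and> tau B = tau X"

definition is_basis :: "'a set \<Rightarrow> ('a set \<Rightarrow> 'a set) \<Rightarrow> 'a set \<Rightarrow> 'a set \<Rightarrow> bool" where
  "is_basis E tau X B \<longleftrightarrow> is_generator E tau X B
     \<and> (\<forall>B'. B' \<subset> B \<longrightarrow> \<not> is_generator E tau X B')"

definition uniquely_generated :: "'a set \<Rightarrow> ('a set \<Rightarrow> 'a set) \<Rightarrow> bool" where
  "uniquely_generated E tau \<longleftrightarrow> (\<forall>X. X \<subseteq> E \<longrightarrow> (\<exists>!B. is_basis E tau X B))"

definition interval :: "'a set \<Rightarrow> 'a set \<Rightarrow> 'a set set" where
  "interval A B = {C. A \<subseteq> C \<and> C \<subseteq> B}"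

definition tau_class :: "'a set \<Rightarrow> ('a set \<Rightarrow> 'a set) \<Rightarrow> 'a set \<Rightarrow> 'a set set" where
  "tau_class E tau X = {Y. Y \<subseteq> E \<and> tau Y = tau X}"

definition hypercube_partition :: "'a set \<Rightarrow> 'a set set set \<Rightarrow> bool" where
  "hypercube_partition E P \<longleftrightarrow>
     \<Union>P = Pow E \<and> {} \<notin> P
     \<and> (\<forall>p\<in>P. \<forall>q\<in>P. p \<noteq> q \<longrightarrow> p \<inter> q = {})
     \<and> (\<forall>p\<in>P. \<exists>A B. A \<subseteq> B \<and> B \<subseteq> E \<and> p = interval A B)"

end

theory Submission
  imports Defs
begin

text \<open>Every set Y with tau Y = tau X lies between the basis A of X and tau X: below tau X by
  (C1), and above A because a minimal generator inside Y exists and, by uniqueness, equals A.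
  Conversely every Y with A \<subseteq> Y \<subseteq> tau X = tau A satisfies tau Y = tau A by (C22).\<close>

lemma violator_spaceD:
  assumes "violator_space E tau"
  shows violator_space_finite: "finite E"
    and violator_space_closed: "Y \<subseteq> E \<Longrightarrow> tau Y \<subseteq> E"
    and violator_space_extensive: "Y \<subseteq> E \<Longrightarrow> Y \<subseteq> tau Y"
    and violator_space_C22:
      "\<lbrakk>F \<subseteq> E; G \<subseteq> E; F \<subseteq> G; G \<subseteq> tau F\<rbrakk> \<Longrightarrow> tau G = tau F"
  using assms unfolding violator_space_def by meson+

lemma generator_contains_basis:
  assumes "finite E" and "is_generator E tau X Y"
  shows "\<exists>B \<subseteq> Y. is_basis E tau X B"
proof -
  let ?G = "{B. B \<subseteq> Y \<and> is_generator E tau X B}"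
  have "Y \<subseteq> E" using assms(2) unfolding is_generator_def by (rule conjunct1)
  then have "finite (Pow Y)" using assms(1) by (simp add: finite_subset)
  then have "finite ?G" by (rule finite_subset[rotated]) auto
  moreover have "Y \<in> ?G" using assms(2) by simp
  ultimately obtain B where "B \<in> ?G" and "\<forall>B' \<in> ?G. B' \<le> B \<longrightarrow> B = B'"
    by (meson finite_has_minimal2)
  then have "is_basis E tau X B" unfolding is_basis_def by blast
  with \<open>B \<in> ?G\<close> show ?thesis by blast
qed

lemma uniquely_generated_basis_subset_generator:
  assumes "finite E" and "uniquely_generated E tau" and "X \<subseteq> E"
    and "is_basis E tau X A" and "is_generator E tau X Y"
  shows "A \<subseteq> Y"
proof -
  obtain B where "B \<subseteq> Y" and "is_basis E tau X B"
    using generator_contains_basis[OF assms(1,5)] by blast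
  moreover have "B = A"
    using assms(2,3,4) \<open>is_basis E tau X B\<close> unfolding uniquely_generated_def by blast
  ultimately show ?thesis by simp
qed

lemma tau_class_eq_interval:
  assumes vs: "violator_space E tau" and ug: "uniquely_generated E tau"
    and X: "X \<subseteq> E" and A: "is_basis E tau X A"
  shows "tau_class E tau X = interval A (tau X)"
proof (rule set_eqI, rule iffI)
  fix Y assume "Y \<in> tau_class E tau X"
  then have Y: "Y \<subseteq> E" "tau Y = tau X" unfolding tau_class_def by auto
  then have "A \<subseteq> Y"
    using uniquely_generated_basis_subset_generator[OF violator_space_finite[OF vs] ug X A]
    unfolding is_generator_def by blast
  moreover have "Y \<subseteq> tau X" using violator_space_extensive[OF vs Y(1)] Y(2) by simp
  ultimately show "Y \<in> interval A (tau X)" unfolding interval_def by blast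
next
  fix Y assume "Y \<in> interval A (tau X)"
  then have "A \<subseteq> Y" "Y \<subseteq> tau X" unfolding interval_def by auto
  have "A \<subseteq> E" "tau A = tau X" using A unfolding is_basis_def is_generator_def by auto
  have "Y \<subseteq> E" using \<open>Y \<subseteq> tau X\<close> violator_space_closed[OF vs X] by blast
  have "tau Y = tau A"
    using violator_space_C22[OF vs \<open>A \<subseteq> E\<close> \<open>Y \<subseteq> E\<close> \<open>A \<subseteq> Y\<close>] \<open>Y \<subseteq> tau X\<close> \<open>tau A = tau X\<close>
    by simp
  with \<open>Y \<subseteq> E\<close> \<open>tau A = tau X\<close> show "Y \<in> tau_class E tau X" unfolding tau_class_def by simp
qed

lemma tau_class_is_interval:
  assumes "violator_space E tau" and "uniquely_generated E tau" and "X \<subseteq> E"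
  shows "\<exists>A B. A \<subseteq> B \<and> B \<subseteq> E \<and> tau_class E tau X = interval A B"
proof -
  obtain A where A: "is_basis E tau X A"
    using assms(2,3) unfolding uniquely_generated_def by blast
  have "A \<subseteq> tau X"
    using A violator_space_extensive[OF assms(1)] unfolding is_basis_def is_generator_def
    by metis
  moreover have "tau X \<subseteq> E" using violator_space_closed[OF assms(1,3)] .
  ultimately show ?thesis using tau_class_eq_interval[OF assms A] by blast
qed

lemma Union_tau_classes: "\<Union>{tau_class E tau X | X. X \<subseteq> E} = Pow E"
  unfolding tau_class_def by blast

lemma tau_class_nonempty: "X \<subseteq> E \<Longrightarrow> tau_class E tau X \<noteq> {}"
  unfolding tau_class_def by blast

lemma tau_classes_disjoint:
  "tau_class E tau X \<noteq> tau_class E tau Y \<Longrightarrow> tau_class E tau X \<inter> tau_class E tau Y = {}"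
  unfolding tau_class_def by auto

theorem mainTheorem16:
  fixes E :: "'a set" and tau :: "'a set \<Rightarrow> 'a set"
  assumes "violator_space E tau"
    and "uniquely_generated E tau"
  shows "hypercube_partition E {tau_class E tau X | X. X \<subseteq> E}"
  unfolding hypercube_partition_def
proof (intro conjI ballI impI)
  show "\<Union>{tau_class E tau X | X. X \<subseteq> E} = Pow E" by (rule Union_tau_classes)
  show "{} \<notin> {tau_class E tau X | X. X \<subseteq> E}" using tau_class_nonempty by fastforce
next
  fix p q assume "p \<in> {tau_class E tau X | X. X \<subseteq> E}" "q \<in> {tau_class E tau X | X. X \<subseteq> E}"
    and "p \<noteq> q"
  then show "p \<inter> q = {}" using tau_classes_disjoint by blast
next
  fix p assume "p \<in> {tau_class E tau X | X. X \<subseteq> E}"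
  then show "\<exists>A B. A \<subseteq> B \<and> B \<subseteq> E \<and> p = interval A B"
    using tau_class_is_interval[OF assms] by blast
qed

end
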